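(* Let $b\in\mathbb{R}$. For $X=(y^1,y^2,y^3,x^1,x^2,x^3,z^1,z^2,z^3)^T\in\mathbb{C}^9$ write $y^\pm=y^1\pm\mathrm{i}y^2$, $x^\pm=x^1\pm\mathrm{i}x^2$, $z^\pm=z^1\pm\mathrm{i}z^2$, and $$\mathcal{L}_X(\lambda)=\frac{\mathrm{i}}{2}\begin{pmatrix}u(\lambda)&v(\lambda)\\ w(\lambda)&-u(\lambda)\end{pmatrix},\quad u=b+\frac{y^3}{\lambda}+\frac{x^3}{\lambda^2}+\frac{z^3}{\lambda^3},\ v=\frac{y^-}{\lambda}+\frac{x^-}{\lambda^2}+\frac{z^-}{\lambda^3},\ w=\frac{y^+}{\lambda}+\frac{x^+}{\lambda^2}+\frac{z^+}{\lambda^3}.$$ Let $\eta\in\mathbb{C}$, $\eta_1=\eta$, $\eta_2=\bar\eta$, and let $\mu_1,\mu_2\in\mathbb{C}$ satisfy $4\mu_j^2+u(\eta_j)^2+v(\eta_j)w(\eta_j)=0$ ($j=1,2$). Define (whenever the denominators are nonzero) $$s=\frac{u(\eta_1)-\mu_1}{v(\eta_1)},\qquad t=\frac{(\eta_1-\eta_2)(u(\eta_1)+\mu_1)(u(\eta_2)-\mu_2)}{(u(\eta_1)+\mu_1)w(\eta_2)-(u(\eta_2)-\mu_2)w(\eta_1)},$$ $$\mathcal{M}(\lambda)=\begin{pmatrix}\lambda-\eta_1+st& t\\ -s^2t+(\eta_1-\eta_2)s&\lambda-\eta_2-st\end{pmatrix}.$$ Suppose $\breve X\in\mathbb{C}^9$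 is such that $\mathcal{M}(\lambda)\mathcal{L}_X(\lambda)=\mathcal{L}_{\breve X}(\lambda)\mathcal{M}(\lambda)$ for all $\lambda$ (this defines the two-point Bäcklund transformation $X\mapsto\breve X$). Then $$\breve X=\Phi\,X+X_0,\qquad \Phi=\begin{pmatrix}\mathbb{1}_3&0&0\\ A&\mathbb{1}_3&0\\ B&A&\mathbb{1}_3\end{pmatrix},$$ where $A,B$ are $3\times3$ matrices depending only on $s,t,\eta$, and $X_0\in\mathbb{C}^9$ is a vector depending only on $s,t,\eta$ and $b$ (here $\mathbb 1_3$ is the $3\times3$ identity and $0$ the $3\times3$ zero matrix).
   Context: $\mathrm{i}$ is the imaginary unit and $\bar\eta$ the complex conjugate of $\eta$. The quantities $s,t$ themselves depend on $X$, so the map $X\mapsto\breve X$ is nonlinear; the claim concerns the dependence of $\breve X$ on $X$ with $s,t,\eta$ regarded as parameters. *)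

theory Defs
  imports "HOL-Analysis.Analysis"
begin

text \<open>A point X = (y^1,y^2,y^3,x^1,x^2,x^3,z^1,z^2,z^3) of C^9 is represented by its
  three blocks (y, x, z), each in complex^3 (components indexed 1,2,3).\<close>

type_synonym pt9 = "(complex^3) \<times> (complex^3) \<times> (complex^3)"

definition yb :: "pt9 \<Rightarrow> complex^3" where "yb X = fst X"
definition xb :: "pt9 \<Rightarrow> complex^3" where "xb X = fst (snd X)"
definition zb :: "pt9 \<Rightarrow> complex^3" where "zb X = snd (snd X)"

definition mat2 :: "complex \<Rightarrow> complex \<Rightarrow> complex \<Rightarrow> complex \<Rightarrow> complex^2^2" where
  "mat2 a11 a12 a21 a22 = (\<chi> i j. if i = 1 then (if j = 1 then a11 else a12)
                                   else (if j = 1 then a21 else a22))"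

definition uL :: "real \<Rightarrow> pt9 \<Rightarrow> complex \<Rightarrow> complex" where
  "uL b X l = complex_of_real b + yb X $ 3 / l + xb X $ 3 / l^2 + zb X $ 3 / l^3"

definition vL :: "pt9 \<Rightarrow> complex \<Rightarrow> complex" where
  "vL X l = (yb X $ 1 - \<i> * yb X $ 2) / l + (xb X $ 1 - \<i> * xb X $ 2) / l^2
            + (zb X $ 1 - \<i> * zb X $ 2) / l^3"

definition wL :: "pt9 \<Rightarrow> complex \<Rightarrow> complex" where
  "wL X l = (yb X $ 1 + \<i> * yb X $ 2) / l + (xb X $ 1 + \<i> * xb X $ 2) / l^2
            + (zb X $ 1 + \<i> * zb X $ 2) / l^3"

definition Lax :: "real \<Rightarrow> pt9 \<Rightarrow> complex \<Rightarrow> complex^2^2" where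
  "Lax b X l = mat2 (\<i>/2 * uL b X l) (\<i>/2 * vL X l) (\<i>/2 * wL X l) (\<i>/2 * - uL b X l)"

definition sB :: "real \<Rightarrow> pt9 \<Rightarrow> complex \<Rightarrow> complex \<Rightarrow> complex" where
  "sB b X eta1 mu1 = (uL b X eta1 - mu1) / vL X eta1"

definition tden :: "real \<Rightarrow> pt9 \<Rightarrow> complex \<Rightarrow> complex \<Rightarrow> complex \<Rightarrow> complex \<Rightarrow> complex" where
  "tden b X eta1 eta2 mu1 mu2 =
     (uL b X eta1 + mu1) * wL X eta2 - (uL b X eta2 - mu2) * wL X eta1"

definition tB :: "real \<Rightarrow> pt9 \<Rightarrow> complex \<Rightarrow> complex \<Rightarrow> complex \<Rightarrow> complex \<Rightarrow> complex" where
  "tB b X eta1 eta2 mu1 mu2 =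
     (eta1 - eta2) * (uL b X eta1 + mu1) * (uL b X eta2 - mu2) / tden b X eta1 eta2 mu1 mu2"

definition Mdress :: "complex \<Rightarrow> complex \<Rightarrow> complex \<Rightarrow> complex \<Rightarrow> complex \<Rightarrow> complex^2^2" where
  "Mdress eta1 eta2 s t l =
     mat2 (l - eta1 + s * t) t ((- (s^2 * t)) + (eta1 - eta2) * s) (l - eta2 - s * t)"

text \<open>Action of Phi = [[1,0,0],[A,1,0],[B,A,1]] (3x3 blocks) on X = (y,x,z).\<close>
definition Phi_apply :: "complex^3^3 \<Rightarrow> complex^3^3 \<Rightarrow> pt9 \<Rightarrow> pt9" where
  "Phi_apply A B X = (yb X, A *v yb X + xb X, B *v yb X + A *v xb X + zb X)"

end

theory Submission
  imports Defs
begin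

text \<open>
  Writing \<open>y\<cdot>\<sigma> = y_1 \<sigma>_1 + y_2 \<sigma>_2 + y_3 \<sigma>_3\<close> with the Pauli matrices \<open>\<sigma>_j\<close>, the Lax matrix is
  \<open>L_X(\<lambda>) = (i/2) \<Sum>_k C_k \<lambda>^-k\<close> with \<open>C_0 = b \<sigma>_3\<close>, \<open>C_1 = y\<cdot>\<sigma>\<close>, \<open>C_2 = x\<cdot>\<sigma>\<close>,
  \<open>C_3 = z\<cdot>\<sigma>\<close>, and the dressing matrix is \<open>M(\<lambda>) = \<lambda> + N\<close> with \<open>N = M(0)\<close> depending only
  on \<open>s, t, \<eta>\<close>. Comparing the coefficients of \<open>\<lambda>^-k\<close> in \<open>M L_X = L_X' M\<close> gives
  \<open>C'_(k+1) - C_(k+1) = [N, C_k] - (C'_k - C_k) N\<close>. As \<open>C'_0 = C_0\<close>, this determines in turn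
  \<open>y' - y\<close> as a constant, \<open>x' - x\<close> as \<open>[N, y\<cdot>\<sigma>]\<close> plus a constant, and \<open>z' - z\<close> as
  \<open>[N, x\<cdot>\<sigma>] - [N, y\<cdot>\<sigma>] N\<close> plus a constant (all read in \<open>\<sigma>\<close>-coordinates): an affine map
  with the unipotent block structure of \<open>\<Phi>\<close>, whose linear part depends only on \<open>N\<close>.
  The conditions on \<open>\<mu>_j\<close> and the nondegeneracy hypotheses only make \<open>s, t\<close> well defined;
  the argument does not use them.
\<close>

lemma polyfun_eq_0_on_nonzero:
  fixes c :: "nat \<Rightarrow> 'a::real_normed_field"
  assumes "\<And>z. z \<noteq> 0 \<Longrightarrow> (\<Sum>i\<le>n. c i * z^i) = 0"
  shows "i \<le> n \<Longrightarrow> c i = 0"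
proof -
  have "UNIV - {0} \<subseteq> {z. (\<Sum>i\<le>n. c i * z^i) = 0}"
    using assms by auto
  moreover have "infinite (UNIV - {0::'a})"
    by (simp add: infinite_UNIV_char_0)
  ultimately have "infinite {z. (\<Sum>i\<le>n. c i * z^i) = 0}"
    using finite_subset by blast
  then show "i \<le> n \<Longrightarrow> c i = 0"
    using polyfun_finite_roots[of c n] by auto
qed

lemma laurent_shift_coeffs:
  fixes d e :: "nat \<Rightarrow> 'a::real_normed_field"
  assumes "\<And>l. l \<noteq> 0 \<Longrightarrow> l * (\<Sum>k\<le>n. d k / l^k) + (\<Sum>k\<le>n. e k / l^k) = 0"
    and "k < n"
  shows "d (Suc k) + e k = 0"
proof -
  \<comment> \<open>coefficients of \<open>z (l \<Sum>_k d_k l^-k + \<Sum>_k e_k l^-k)\<close> as a polynomial in \<open>z = 1/l\<close>\<close>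
  define c where "c j = (if j \<le> n then d j else 0)
    + (case j of 0 \<Rightarrow> 0 | Suc k \<Rightarrow> if k \<le> n then e k else 0)" for j
  have "(\<Sum>j\<le>Suc n. c j * z^j) = 0" if "z \<noteq> 0" for z
  proof -
    have "(\<Sum>j\<le>Suc n. c j * z^j) = (\<Sum>k\<le>n. d k * z^k) + (\<Sum>k\<le>n. e k * z^Suc k)"
    proof -
      have "(\<Sum>j\<le>Suc n. (if j \<le> n then d j else 0) * z^j) = (\<Sum>k\<le>n. d k * z^k)"
        by simp
      moreover have "(\<Sum>j\<le>Suc n. (case j of 0 \<Rightarrow> 0 | Suc k \<Rightarrow> if k \<le> n then e k else 0) * z^j)
          = (\<Sum>k\<le>n. e k * z^Suc k)"
        by (simp only: sum.atMost_Suc_shift) simp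
      ultimately show ?thesis
        unfolding c_def distrib_right sum.distrib by simp
    qed
    also have "\<dots> = z * (inverse z * (\<Sum>k\<le>n. d k / inverse z ^ k) + (\<Sum>k\<le>n. e k / inverse z ^ k))"
      using that by (simp add: field_simps sum_distrib_left)
    also have "\<dots> = 0"
      using assms(1)[of "inverse z"] that by simp
    finally show ?thesis .
  qed
  then have "c (Suc k) = 0"
    using polyfun_eq_0_on_nonzero assms(2) by (metis Suc_le_mono less_imp_le)
  then show ?thesis
    using assms(2) by (simp add: c_def)
qed

definition laurent_mat :: "nat \<Rightarrow> (nat \<Rightarrow> 'a::field^'n^'m) \<Rightarrow> 'a \<Rightarrow> 'a^'n^'m" where
  "laurent_mat n C l = (\<chi> i j. \<Sum>k\<le>n. C k $ i $ j / l^k)"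

lemma laurent_mat_component: "laurent_mat n C l $ i $ j = (\<Sum>k\<le>n. C k $ i $ j / l^k)"
  by (simp add: laurent_mat_def)

lemma mat_mult_component: "(mat c ** A) $ i $ j = c * A $ i $ j"
  by (simp add: matrix_matrix_mult_def mat_def if_distrib if_distribR sum.delta' cong: if_cong)

lemma mult_mat_component: "(A ** mat c) $ i $ j = A $ i $ j * c"
  by (simp add: matrix_matrix_mult_def mat_def if_distrib if_distribR sum.delta' cong: if_cong)

lemma matrix_add_rdistrib: "(A + B) ** C = A ** C + B ** C"
  by (vector matrix_matrix_mult_def sum.distrib[symmetric] field_simps)

lemma mult_laurent_mat_component:
  "(N ** laurent_mat n C l) $ i $ j = (\<Sum>k\<le>n. (N ** C k) $ i $ j / l^k)"
  by (simp add: matrix_matrix_mult_def laurent_mat_def sum_distrib_left sum_divide_distrib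
      sum.swap[of _ UNIV] mult.commute)

lemma laurent_mat_mult_component:
  "(laurent_mat n C l ** N) $ i $ j = (\<Sum>k\<le>n. (C k ** N) $ i $ j / l^k)"
  by (simp add: matrix_matrix_mult_def laurent_mat_def sum_distrib_left sum_divide_distrib
      sum.swap[of _ UNIV] mult.commute)

lemma laurent_mat_dressing_recursion:
  fixes N :: "'a::real_normed_field^'n^'n" and C D :: "nat \<Rightarrow> 'a^'n^'n"
  assumes "\<And>l. l \<noteq> 0 \<Longrightarrow> (mat l + N) ** laurent_mat n C l = laurent_mat n D l ** (mat l + N)"
    and "k < n"
  shows "D (Suc k) = C (Suc k) + N ** C k - D k ** N"
proof -
  have "(C (Suc k) - D (Suc k)) $ i $ j + (N ** C k - D k ** N) $ i $ j = 0" for i j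
  proof (rule laurent_shift_coeffs[OF _ assms(2)])
    fix l :: 'a
    assume "l \<noteq> 0"
    have "l * (\<Sum>k\<le>n. C k $ i $ j / l^k) + (\<Sum>k\<le>n. (N ** C k) $ i $ j / l^k)
        = l * (\<Sum>k\<le>n. D k $ i $ j / l^k) + (\<Sum>k\<le>n. (D k ** N) $ i $ j / l^k)"
      using arg_cong[OF assms(1)[OF \<open>l \<noteq> 0\<close>], of "\<lambda>M. M $ i $ j"]
      by (simp add: matrix_add_ldistrib matrix_add_rdistrib mat_mult_component mult_mat_component
          mult_laurent_mat_component laurent_mat_mult_component laurent_mat_component
          mult.commute sum_distrib_left)
    then show "l * (\<Sum>k\<le>n. (C k - D k) $ i $ j / l^k)
        + (\<Sum>k\<le>n. (N ** C k - D k ** N) $ i $ j / l^k) = 0"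
      by (simp add: diff_divide_distrib sum_subtractf algebra_simps)
  qed
  then show ?thesis
    by (simp add: vec_eq_iff algebra_simps)
qed

definition pauli :: "complex^3 \<Rightarrow> complex^2^2" where
  "pauli y = mat2 (y$3) (y$1 - \<i> * y$2) (y$1 + \<i> * y$2) (- y$3)"

definition pauli_coords :: "complex^2^2 \<Rightarrow> complex^3" where
  "pauli_coords M = vector [(M$1$2 + M$2$1) / 2, \<i> * (M$1$2 - M$2$1) / 2, M$1$1]"

definition pauli_ad :: "complex^2^2 \<Rightarrow> complex^3 \<Rightarrow> complex^3" where
  "pauli_ad N y = pauli_coords (N ** pauli y - pauli y ** N)"

definition pauli_rmult :: "complex^2^2 \<Rightarrow> complex^3 \<Rightarrow> complex^3" where
  "pauli_rmult N y = pauli_coords (pauli y ** N)"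

lemma pauli_coords_pauli [simp]: "pauli_coords (pauli y) = y"
  by (simp add: pauli_coords_def pauli_def mat2_def vec_eq_iff forall_3 field_simps)

lemmas pauli_simps = pauli_ad_def pauli_rmult_def pauli_coords_def pauli_def mat2_def
  matrix_matrix_mult_def sum_2 vec_eq_iff forall_3

lemma linear_pauli_ad: "Vector_Spaces.linear (*s) (*s) (pauli_ad N)"
  by (auto simp: Vector_Spaces.linear_iff vec.vector_space_axioms pauli_simps field_simps)

lemma linear_pauli_rmult: "Vector_Spaces.linear (*s) (*s) (pauli_rmult N)"
  by (auto simp: Vector_Spaces.linear_iff vec.vector_space_axioms pauli_simps field_simps)

lemma pauli_rmult_diff: "pauli_rmult N (y - z) = pauli_rmult N y - pauli_rmult N z"
  by (simp add: pauli_simps field_simps)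

lemma pauli_coords_dressing_step:
  "pauli_coords (pauli (a *s p) + N ** pauli (a *s q) - pauli (a *s r) ** N)
     = a *s (p + pauli_ad N q - pauli_rmult N (r - q))"
  by (simp add: pauli_simps field_simps)

lemma pauli_dressing_recursion:
  fixes N :: "complex^2^2" and c d :: "nat \<Rightarrow> complex^3"
  assumes "a \<noteq> 0"
    and "\<And>l. l \<noteq> 0 \<Longrightarrow> (mat l + N) ** laurent_mat n (\<lambda>k. pauli (a *s c k)) l
                        = laurent_mat n (\<lambda>k. pauli (a *s d k)) l ** (mat l + N)"
    and "k < n"
  shows "d (Suc k) = c (Suc k) + pauli_ad N (c k) - pauli_rmult N (d k - c k)"
proof -
  have "pauli (a *s d (Suc k))
      = pauli (a *s c (Suc k)) + N ** pauli (a *s c k) - pauli (a *s d k) ** N"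
    using laurent_mat_dressing_recursion[OF assms(2,3)] .
  then have "a *s d (Suc k) = a *s (c (Suc k) + pauli_ad N (c k) - pauli_rmult N (d k - c k))"
    by (metis pauli_coords_pauli pauli_coords_dressing_step)
  then show ?thesis
    using assms(1) vector_mul_lcancel by blast
qed

definition lax_block :: "real \<Rightarrow> pt9 \<Rightarrow> nat \<Rightarrow> complex^3" where
  "lax_block b X k = [vector [0, 0, complex_of_real b], yb X, xb X, zb X] ! k"

lemma Lax_eq_laurent_mat: "Lax b X l = laurent_mat 3 (\<lambda>k. pauli ((\<i>/2) *s lax_block b X k)) l"
  by (simp add: Lax_def laurent_mat_def pauli_def mat2_def uL_def vL_def wL_def lax_block_def
      vec_eq_iff forall_2 numeral_3_eq_3 ring_distribs power2_eq_square)

lemma Mdress_eq_mat_plus: "Mdress e1 e2 s t l = mat l + Mdress e1 e2 s t 0"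
  by (simp add: Mdress_def mat2_def mat_def vec_eq_iff forall_2)

lemma Lax_dressing_blocks:
  assumes "\<And>l. l \<noteq> 0 \<Longrightarrow> (mat l + N) ** Lax b X l = Lax b Xb l ** (mat l + N)"
  defines "c \<equiv> pauli_ad N (vector [0, 0, complex_of_real b])"
  shows "yb Xb = yb X + c"
    and "xb Xb = xb X + pauli_ad N (yb X) - pauli_rmult N c"
    and "zb Xb = zb X + pauli_ad N (xb X) - pauli_rmult N (pauli_ad N (yb X))
                 + pauli_rmult N (pauli_rmult N c)"
proof -
  have step: "lax_block b Xb (Suc k) = lax_block b X (Suc k) + pauli_ad N (lax_block b X k)
                - pauli_rmult N (lax_block b Xb k - lax_block b X k)" if "k < 3" for k
    by (rule pauli_dressing_recursion[of "\<i>/2"])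
      (use assms(1) that in \<open>simp_all add: Lax_eq_laurent_mat\<close>)
  show y: "yb Xb = yb X + c"
    using step[of 0] pauli_rmult_diff[of N 0 0] by (simp add: lax_block_def c_def)
  show x: "xb Xb = xb X + pauli_ad N (yb X) - pauli_rmult N c"
    using step[of 1] y by (simp add: lax_block_def)
  show "zb Xb = zb X + pauli_ad N (xb X) - pauli_rmult N (pauli_ad N (yb X))
                 + pauli_rmult N (pauli_rmult N c)"
    using step[of 2] x by (simp add: lax_block_def pauli_rmult_diff numeral_2_eq_2)
qed

lemma Lax_dressing_affine:
  assumes "\<And>l. l \<noteq> 0 \<Longrightarrow> (mat l + N) ** Lax b X l = Lax b Xb l ** (mat l + N)"
  defines "c \<equiv> pauli_ad N (vector [0, 0, complex_of_real b])"
  shows "Xb = Phi_apply (matrix (pauli_ad N)) (matrix (\<lambda>y. - pauli_rmult N (pauli_ad N y))) X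
              + (c, - pauli_rmult N c, pauli_rmult N (pauli_rmult N c))"
proof -
  have "Vector_Spaces.linear (*s) (*s) (\<lambda>y. - pauli_rmult N (pauli_ad N y))"
    using vec.linear_compose_neg[OF
        Vector_Spaces.linear_compose[OF linear_pauli_ad linear_pauli_rmult]]
    by (simp add: o_def)
  then show ?thesis
    using Lax_dressing_blocks[OF assms(1), folded c_def]
    by (simp add: Phi_apply_def matrix_works[OF linear_pauli_ad] matrix_works
        prod_eq_iff yb_def xb_def zb_def algebra_simps)
qed

theorem proposition7:
  fixes b :: real
  shows "\<exists>(A :: complex \<Rightarrow> complex \<Rightarrow> complex \<Rightarrow> complex^3^3)
           (B :: complex \<Rightarrow> complex \<Rightarrow> complex \<Rightarrow> complex^3^3)
           (X0 :: complex \<Rightarrow> complex \<Rightarrow> complex \<Rightarrow> pt9).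
     \<forall>(eta :: complex) (mu1 :: complex) (mu2 :: complex) (X :: pt9) (Xb :: pt9).
       4 * mu1^2 + (uL b X eta)^2 + vL X eta * wL X eta = 0 \<longrightarrow>
       4 * mu2^2 + (uL b X (cnj eta))^2 + vL X (cnj eta) * wL X (cnj eta) = 0 \<longrightarrow>
       vL X eta \<noteq> 0 \<longrightarrow>
       tden b X eta (cnj eta) mu1 mu2 \<noteq> 0 \<longrightarrow>
       (\<forall>l. l \<noteq> 0 \<longrightarrow>
          Mdress eta (cnj eta) (sB b X eta mu1) (tB b X eta (cnj eta) mu1 mu2) l ** Lax b X l
          = Lax b Xb l ** Mdress eta (cnj eta) (sB b X eta mu1) (tB b X eta (cnj eta) mu1 mu2) l) \<longrightarrow>
       Xb = Phi_apply (A (sB b X eta mu1) (tB b X eta (cnj eta) mu1 mu2) eta)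
                      (B (sB b X eta mu1) (tB b X eta (cnj eta) mu1 mu2) eta) X
            + X0 (sB b X eta mu1) (tB b X eta (cnj eta) mu1 mu2) eta"
proof -
  define N where "N s t e = Mdress e (cnj e) s t 0" for s t e
  define c where "c s t e = pauli_ad (N s t e) (vector [0, 0, complex_of_real b])" for s t e
  define A where "A s t e = matrix (pauli_ad (N s t e))" for s t e
  define B where "B s t e = matrix (\<lambda>y. - pauli_rmult (N s t e) (pauli_ad (N s t e) y))" for s t e
  define X0 where "X0 s t e = (c s t e, - pauli_rmult (N s t e) (c s t e),
                               pauli_rmult (N s t e) (pauli_rmult (N s t e) (c s t e)))" for s t e
  have "Xb = Phi_apply (A s t e) (B s t e) X + X0 s t e"
    if "\<forall>l. l \<noteq> 0 \<longrightarrow> Mdress e (cnj e) s t l ** Lax b X l = Lax b Xb l ** Mdress e (cnj e) s t l"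
    for s t e X Xb
    using Lax_dressing_affine[of "N s t e"] that
    unfolding A_def B_def X0_def c_def N_def by (metis Mdress_eq_mat_plus)
  then show ?thesis
    by (intro exI[of _ A] exI[of _ B] exI[of _ X0]) simp
qed

end
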